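(* For any simple connected graph $G$ with at least one edge, $src(G)\geq \chi'(G)\geq \omega'(G)$. Moreover, if an edge coloring $f$ of $G$ strongly rainbow connects $G$, then $f$ is a proper coloring of the vertices of the auxiliary graph $H(G)$.
   Context: An edge coloring of $G$ is any function $f:E(G)\to\{1,\dots,k\}$, $k\in\mathbb{N}$ (adjacent edges may share a color). A path is rainbow with respect to $f$ if its edges receive pairwise distinct colors. $f$ strongly rainbow connects $G$ if for every pair of distinct vertices $u,v$ there is a shortest $(u,v)$-path that is rainbow; $src(G)$ is the minimum $k$ for which such an $f:E(G)\to\{1,\dots,k\}$ exists. For distinct $u_1,u_2\in V(G)$, an edge $e$ separates $u_1,u_2$ if $e$ lies on every shortest $(u_1,u_2)$-path in $G$. The auxiliary graph $H(G)$ has vertex set $E(G)$, and two distinct edges $e_1,e_2\in E(G)$ are adjacent in $H(G)$ iff there exists a pair of distinct vertices $v_1,v_2\in V(G)$ separated by both $e_1$ and $e_2$. Define $\omega'(G)=\omega(H(G))$ (clique number) and $\chi'(G)=\chi(H(G))$ (chromatic number). Since $V(H(G))=E(G)$, an edge coloring of $G$ is a coloring of the vertices of $H(G)$. *)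

theory Defs
  imports Main
begin

definition simple_graph :: "'a set \<Rightarrow> 'a set set \<Rightarrow> bool" where
  "simple_graph V E \<longleftrightarrow> finite V \<and>
     (\<forall>e\<in>E. \<exists>u v. u \<in> V \<and> v \<in> V \<and> u \<noteq> v \<and> e = {u, v})"

definition is_walk :: "'a set \<Rightarrow> 'a set set \<Rightarrow> 'a list \<Rightarrow> bool" where
  "is_walk V E xs \<longleftrightarrow> xs \<noteq> [] \<and> set xs \<subseteq> V \<and>
     (\<forall>i. Suc i < length xs \<longrightarrow> {xs ! i, xs ! Suc i} \<in> E)"

definition connected_graph :: "'a set \<Rightarrow> 'a set set \<Rightarrow> bool" where
  "connected_graph V E \<longleftrightarrow>
     (\<forall>u\<in>V. \<forall>v\<in>V. \<exists>xs. is_walk V E xs \<and> hd xs = u \<and> last xs = v)"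

definition is_path :: "'a set \<Rightarrow> 'a set set \<Rightarrow> 'a list \<Rightarrow> 'a \<Rightarrow> 'a \<Rightarrow> bool" where
  "is_path V E xs u v \<longleftrightarrow> is_walk V E xs \<and> distinct xs \<and> hd xs = u \<and> last xs = v"

definition shortest_path :: "'a set \<Rightarrow> 'a set set \<Rightarrow> 'a list \<Rightarrow> 'a \<Rightarrow> 'a \<Rightarrow> bool" where
  "shortest_path V E xs u v \<longleftrightarrow> is_path V E xs u v \<and>
     (\<forall>ys. is_path V E ys u v \<longrightarrow> length xs \<le> length ys)"

definition path_edges :: "'a list \<Rightarrow> 'a set list" where
  "path_edges xs = map (\<lambda>i. {xs ! i, xs ! Suc i}) [0..<length xs - 1]"

definition rainbow :: "('a set \<Rightarrow> nat) \<Rightarrow> 'a list \<Rightarrow> bool" where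
  "rainbow f xs \<longleftrightarrow> distinct (map f (path_edges xs))"

definition strongly_rainbow_connects :: "'a set \<Rightarrow> 'a set set \<Rightarrow> ('a set \<Rightarrow> nat) \<Rightarrow> bool" where
  "strongly_rainbow_connects V E f \<longleftrightarrow>
     (\<forall>u\<in>V. \<forall>v\<in>V. u \<noteq> v \<longrightarrow> (\<exists>xs. shortest_path V E xs u v \<and> rainbow f xs))"

definition src :: "'a set \<Rightarrow> 'a set set \<Rightarrow> nat" where
  "src V E = (LEAST k. \<exists>f. f ` E \<subseteq> {1..k} \<and> strongly_rainbow_connects V E f)"

definition separates :: "'a set \<Rightarrow> 'a set set \<Rightarrow> 'a set \<Rightarrow> 'a \<Rightarrow> 'a \<Rightarrow> bool" where
  "separates V E e u1 u2 \<longleftrightarrow> u1 \<noteq> u2 \<and>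
     (\<forall>xs. shortest_path V E xs u1 u2 \<longrightarrow> e \<in> set (path_edges xs))"

definition H_adj :: "'a set \<Rightarrow> 'a set set \<Rightarrow> 'a set \<Rightarrow> 'a set \<Rightarrow> bool" where
  "H_adj V E e1 e2 \<longleftrightarrow> e1 \<in> E \<and> e2 \<in> E \<and> e1 \<noteq> e2 \<and>
     (\<exists>v1\<in>V. \<exists>v2\<in>V. v1 \<noteq> v2 \<and> separates V E e1 v1 v2 \<and> separates V E e2 v1 v2)"

definition is_clique :: "'b set \<Rightarrow> ('b \<Rightarrow> 'b \<Rightarrow> bool) \<Rightarrow> 'b set \<Rightarrow> bool" where
  "is_clique W R C \<longleftrightarrow> C \<subseteq> W \<and> (\<forall>x\<in>C. \<forall>y\<in>C. x \<noteq> y \<longrightarrow> R x y)"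

definition clique_number :: "'b set \<Rightarrow> ('b \<Rightarrow> 'b \<Rightarrow> bool) \<Rightarrow> nat" where
  "clique_number W R = Max {card C | C. is_clique W R C}"

definition proper_coloring :: "'b set \<Rightarrow> ('b \<Rightarrow> 'b \<Rightarrow> bool) \<Rightarrow> ('b \<Rightarrow> nat) \<Rightarrow> bool" where
  "proper_coloring W R c \<longleftrightarrow> (\<forall>x\<in>W. \<forall>y\<in>W. R x y \<longrightarrow> c x \<noteq> c y)"

definition chromatic_number :: "'b set \<Rightarrow> ('b \<Rightarrow> 'b \<Rightarrow> bool) \<Rightarrow> nat" where
  "chromatic_number W R = (LEAST k. \<exists>c. c ` W \<subseteq> {1..k} \<and> proper_coloring W R c)"

definition omega' :: "'a set \<Rightarrow> 'a set set \<Rightarrow> nat" where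
  "omega' V E = clique_number E (H_adj V E)"

definition chi' :: "'a set \<Rightarrow> 'a set set \<Rightarrow> nat" where
  "chi' V E = chromatic_number E (H_adj V E)"

end

theory Submission
  imports Defs
begin

text \<open>A colouring that strongly rainbow connects G must give distinct colours to two edges
  that both separate some pair v1, v2: both lie on the rainbow shortest (v1,v2)-path.
  Hence every such colouring with k colours is a proper k-colouring of H(G), so
  src(G) \<ge> \<chi>(H(G)); and \<chi> \<ge> \<omega> holds in every graph. All numbers are attained because
  giving every edge its own colour is both a strong rainbow colouring and a proper
  colouring of H(G).\<close>

lemma proper_coloring_inj_on:
  assumes "inj_on c W" and "\<And>x. x \<in> W \<Longrightarrow> \<not> R x x"
  shows "proper_coloring W R c"
  using assms unfolding proper_coloring_def inj_on_def by metis

lemma card_clique_le_colors: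
  assumes "proper_coloring W R c" and "c ` W \<subseteq> {1..k}" and "is_clique W R C"
  shows "card C \<le> k"
proof -
  have "C \<subseteq> W" using assms(3) unfolding is_clique_def by blast
  have "inj_on c C"
    using assms \<open>C \<subseteq> W\<close> unfolding inj_on_def is_clique_def proper_coloring_def by blast
  then have "card C = card (c ` C)" by (simp add: card_image)
  also have "\<dots> \<le> card {1..k}" using assms(2) \<open>C \<subseteq> W\<close> by (intro card_mono) auto
  finally show ?thesis by simp
qed

lemma chromatic_number_le:
  assumes "c ` W \<subseteq> {1..k}" and "proper_coloring W R c"
  shows "chromatic_number W R \<le> k"
  unfolding chromatic_number_def by (rule Least_le) (use assms in blast)

lemma chromatic_number_attained:
  assumes "c ` W \<subseteq> {1..k}" and "proper_coloring W R c"
  obtains c' where "c' ` W \<subseteq> {1..chromatic_number W R}" and "proper_coloring W R c'"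
  using LeastI_ex[of "\<lambda>k. \<exists>c. c ` W \<subseteq> {1..k} \<and> proper_coloring W R c"] assms
  unfolding chromatic_number_def by blast

lemma clique_number_le_chromatic_number:
  assumes "finite W" and "\<And>x. x \<in> W \<Longrightarrow> \<not> R x x"
  shows "clique_number W R \<le> chromatic_number W R"
proof -
  obtain c where "bij_betw c W {1..card W}"
    using finite_same_card_bij[OF \<open>finite W\<close>, of "{1..card W}"] by auto
  then have "c ` W \<subseteq> {1..card W}" and "proper_coloring W R c"
    using assms(2) by (auto simp: bij_betw_def intro: proper_coloring_inj_on)
  then obtain c' where c': "c' ` W \<subseteq> {1..chromatic_number W R}" "proper_coloring W R c'"
    by (rule chromatic_number_attained)
  let ?S = "{card C | C. is_clique W R C}"
  have "?S \<subseteq> {..card W}"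
    using \<open>finite W\<close> by (auto simp: is_clique_def intro: card_mono)
  then have "finite ?S" by (rule finite_subset) simp
  moreover have "?S \<noteq> {}" using is_clique_def[of W R "{}"] by auto
  moreover have "\<forall>n \<in> ?S. n \<le> chromatic_number W R"
    using card_clique_le_colors[OF c'(2,1)] by blast
  ultimately show ?thesis unfolding clique_number_def by (subst Max_le_iff) auto
qed

lemma simple_graph_finite_edges:
  assumes "simple_graph V E"
  shows "finite E"
proof (rule finite_subset)
  show "E \<subseteq> Pow V" using assms unfolding simple_graph_def by fastforce
  show "finite (Pow V)" using assms unfolding simple_graph_def by simp
qed

lemma is_walk_Cons_Cons:
  "is_walk V E (x # y # xs) \<longleftrightarrow> x \<in> V \<and> {x, y} \<in> E \<and> is_walk V E (y # xs)"
  unfolding is_walk_def by (auto simp: All_less_Suc2 nth_Cons split: nat.splits)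

lemma is_walk_drop: "is_walk V E xs \<Longrightarrow> n < length xs \<Longrightarrow> is_walk V E (drop n xs)"
  unfolding is_walk_def by (auto dest: in_set_dropD)

lemma is_walk_imp_path:
  assumes "is_walk V E xs"
  shows "\<exists>ys. is_path V E ys (hd xs) (last xs)"
  using assms
proof (induction xs rule: induct_list012)
  case 1
  then show ?case by (simp add: is_walk_def)
next
  case (2 x)
  then show ?case by (auto simp: is_path_def)
next
  case (3 x y zs)
  then have "is_walk V E (y # zs)" and x: "x \<in> V" "{x, y} \<in> E"
    by (simp_all add: is_walk_Cons_Cons)
  with "3.IH"(2) obtain ys where ys: "is_path V E ys y (last (y # zs))" by auto
  show ?case
  proof (cases "x \<in> set ys")
    case True
    then obtain a b where ab: "ys = a @ x # b" by (meson split_list)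
    then have "is_path V E (x # b) x (last (x # y # zs))"
      using ys is_walk_drop[of V E ys "length a"] by (simp add: is_path_def)
    then show ?thesis by auto
  next
    case False
    from ys obtain ys' where "ys = y # ys'"
      by (cases ys) (auto simp: is_path_def is_walk_def)
    with ys False x have "is_path V E (x # ys) x (last (x # y # zs))"
      by (simp add: is_path_def is_walk_Cons_Cons)
    then show ?thesis by auto
  qed
qed

lemma shortest_path_exists:
  assumes "connected_graph V E" and "u \<in> V" and "v \<in> V"
  obtains xs where "shortest_path V E xs u v"
proof -
  obtain ws where "is_walk V E ws" "hd ws = u" "last ws = v"
    using assms unfolding connected_graph_def by blast
  then obtain ys where "is_path V E ys u v" using is_walk_imp_path by blast
  then obtain xs where "is_path V E xs u v" "\<forall>zs. is_path V E zs u v \<longrightarrow> length xs \<le> length zs"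
    using ex_has_least_nat[of "\<lambda>xs. is_path V E xs u v" ys length] by blast
  then show ?thesis using that unfolding shortest_path_def by blast
qed

lemma distinct_path_edges: "distinct xs \<Longrightarrow> distinct (path_edges xs)"
  unfolding path_edges_def distinct_map inj_on_def
  by (auto simp: doubleton_eq_iff nth_eq_iff_index_eq)

lemma set_path_edges_subset: "is_walk V E xs \<Longrightarrow> set (path_edges xs) \<subseteq> E"
  unfolding path_edges_def is_walk_def by auto

lemma strongly_rainbow_connects_imp_proper_coloring:
  assumes "strongly_rainbow_connects V E f"
  shows "proper_coloring E (H_adj V E) f"
  unfolding proper_coloring_def
proof (intro ballI impI)
  fix e1 e2 assume "H_adj V E e1 e2"
  then obtain v1 v2 where v: "v1 \<in> V" "v2 \<in> V" "v1 \<noteq> v2" and "e1 \<noteq> e2"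
    and sep: "separates V E e1 v1 v2" "separates V E e2 v1 v2"
    unfolding H_adj_def by blast
  obtain xs where xs: "shortest_path V E xs v1 v2" "rainbow f xs"
    using assms v unfolding strongly_rainbow_connects_def by blast
  have "e1 \<in> set (path_edges xs)" "e2 \<in> set (path_edges xs)"
    using sep xs(1) unfolding separates_def by auto
  moreover have "inj_on f (set (path_edges xs))"
    using xs(2) unfolding rainbow_def by (simp add: distinct_map)
  ultimately show "f e1 \<noteq> f e2" using \<open>e1 \<noteq> e2\<close> by (meson inj_onD)
qed

lemma inj_on_imp_strongly_rainbow_connects:
  assumes "connected_graph V E" and "inj_on f E"
  shows "strongly_rainbow_connects V E f"
  unfolding strongly_rainbow_connects_def
proof (intro ballI impI)
  fix u v assume "u \<in> V" "v \<in> V" "u \<noteq> v"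
  then obtain xs where xs: "shortest_path V E xs u v"
    using shortest_path_exists assms(1) by metis
  then have "is_walk V E xs" "distinct xs" unfolding shortest_path_def is_path_def by auto
  then have "rainbow f xs"
    using assms(2) distinct_path_edges set_path_edges_subset
    unfolding rainbow_def by (metis distinct_map inj_on_subset)
  with xs show "\<exists>xs. shortest_path V E xs u v \<and> rainbow f xs" by blast
qed

lemma src_attained:
  assumes "finite E" and "connected_graph V E"
  obtains f where "f ` E \<subseteq> {1..src V E}" and "strongly_rainbow_connects V E f"
proof -
  obtain c where "bij_betw c E {1..card E}"
    using finite_same_card_bij[OF \<open>finite E\<close>, of "{1..card E}"] by auto
  then have "c ` E \<subseteq> {1..card E}" and "strongly_rainbow_connects V E c"
    using assms(2) by (auto simp: bij_betw_def intro: inj_on_imp_strongly_rainbow_connects)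
  then show ?thesis
    using that LeastI_ex[of "\<lambda>k. \<exists>f. f ` E \<subseteq> {1..k} \<and> strongly_rainbow_connects V E f"]
    unfolding src_def by blast
qed

theorem theorem1:
  fixes V :: "'a set" and E :: "'a set set"
  assumes "simple_graph V E" and "connected_graph V E" and "E \<noteq> {}"
  shows "src V E \<ge> chi' V E \<and> chi' V E \<ge> omega' V E \<and>
    (\<forall>(k::nat) f. f ` E \<subseteq> {1..k} \<and> strongly_rainbow_connects V E f
        \<longrightarrow> proper_coloring E (H_adj V E) f)"
proof -
  have "finite E" using assms(1) by (rule simple_graph_finite_edges)
  then obtain f where "f ` E \<subseteq> {1..src V E}" and "strongly_rainbow_connects V E f"
    using assms(2) by (rule src_attained)
  then have "chi' V E \<le> src V E"
    unfolding chi'_def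
    by (blast intro: chromatic_number_le strongly_rainbow_connects_imp_proper_coloring)
  moreover have "omega' V E \<le> chi' V E"
    unfolding omega'_def chi'_def
    using \<open>finite E\<close> by (rule clique_number_le_chromatic_number) (simp add: H_adj_def)
  ultimately show ?thesis using strongly_rainbow_connects_imp_proper_coloring by blast
qed

end
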